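(* For every $M\in\mathrm{Mat}_3(\mathbb C)$, the matrix $$L(M)=\sum_{i=1}^d I_3^{\otimes (i-1)}\otimes M\otimes I_3^{\otimes(d-i)}$$ lies in $\mathcal T$ (under the identification $\mathrm{Mat}_X(\mathbb C)=\mathrm{Mat}_3(\mathbb C)^{\otimes d}$ below).
   Context: Let $d\ge1$, $\mathbb F_3=\{0,1,2\}$ and $X=\mathbb F_3^d$. The Hamming digraph $H^*(d,3)$ has vertex set $X$, with an arc from $y$ to $z$ iff $y$ and $z$ differ in exactly one coordinate $i$ and $z_i=y_i+1$ in $\mathbb F_3$. Let $V=\mathbb C^X$ with basis $\{\hat y\}$. The adjacency matrix $A\in\mathrm{Mat}_X(\mathbb C)$ has $(y,z)$-entry $1$ iff there is an arc from $y$ to $z$. For integers $s,t$, $E^*_{[s,t]}$ is the diagonal matrix whose $(y,y)$-entry is $1$ if $y$ has exactly $s$ ones and $t$ twos, and $0$ otherwise. The Terwilliger algebra $\mathcal T$ is the subalgebra of $\mathrm{Mat}_X(\mathbb C)$ generated by $A$, $A^\top$ and all $E^*_{[s,t]}$. With $e_0,e_1,e_2$ the standard basis of $\mathbb C^3$, identify $V$ with $(\mathbb C^3)^{\otimes d}$ via $\hat y\mapsto e_{y_1}\otimes\cdots\otimes e_{y_d}$, and hence $\mathrm{Mat}_X(\mathbb C)$ with $\mathrm{Mat}_3(\mathbb C)^{\otimes d}$. *)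

theory Defs
  imports Complex_Main
begin

text \<open>Vertices of H*(d,3): words y = (y_1,...,y_d) over F_3 = {0,1,2},
  represented as lists of length d with entries < 3 (coordinate i is y ! (i-1)).\<close>
definition vertices :: "nat \<Rightarrow> nat list set" where
  "vertices d = {y. length y = d \<and> (\<forall>a\<in>set y. a < 3)}"

text \<open>Matrices in Mat_X(C): functions X \<Rightarrow> X \<Rightarrow> complex (zero outside X).\<close>
type_synonym xmat = "nat list \<Rightarrow> nat list \<Rightarrow> complex"

definition xmult :: "nat \<Rightarrow> xmat \<Rightarrow> xmat \<Rightarrow> xmat" where
  "xmult d P Q = (\<lambda>y z. \<Sum>w\<in>vertices d. P y w * Q w z)"

definition arc :: "nat \<Rightarrow> nat list \<Rightarrow> nat list \<Rightarrow> bool" where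
  "arc d y z \<longleftrightarrow> (\<exists>i<d. z ! i = (y ! i + 1) mod 3 \<and> (\<forall>j<d. j \<noteq> i \<longrightarrow> z ! j = y ! j))"

definition adjA :: "nat \<Rightarrow> xmat" where
  "adjA d = (\<lambda>y z. if y \<in> vertices d \<and> z \<in> vertices d \<and> arc d y z then 1 else 0)"

definition adjAT :: "nat \<Rightarrow> xmat" where
  "adjAT d = (\<lambda>y z. adjA d z y)"

definition Estar :: "nat \<Rightarrow> int \<Rightarrow> int \<Rightarrow> xmat" where
  "Estar d s t = (\<lambda>y z. if y \<in> vertices d \<and> z = y \<and> int (count_list y 1) = s
                           \<and> int (count_list y 2) = t then 1 else 0)"

text \<open>The Terwilliger algebra: the subalgebra of Mat_X(C) generated by A, A^T and all E*_[s,t]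
  (closure under addition, complex scalar multiples and matrix products; it contains the
  identity since the identity is the sum of the E*_[s,t]).\<close>
inductive_set terwilliger :: "nat \<Rightarrow> xmat set" for d where
  genA: "adjA d \<in> terwilliger d"
| genAT: "adjAT d \<in> terwilliger d"
| genE: "Estar d s t \<in> terwilliger d"
| add: "P \<in> terwilliger d \<Longrightarrow> Q \<in> terwilliger d \<Longrightarrow> (\<lambda>y z. P y z + Q y z) \<in> terwilliger d"
| smult: "P \<in> terwilliger d \<Longrightarrow> (\<lambda>y z. c * P y z) \<in> terwilliger d"
| mult: "P \<in> terwilliger d \<Longrightarrow> Q \<in> terwilliger d \<Longrightarrow> xmult d P Q \<in> terwilliger d"

text \<open>3x3 matrices: functions nat \<Rightarrow> nat \<Rightarrow> complex, only indices 0,1,2 are used.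
  Identity I_3:\<close>
definition I3 :: "nat \<Rightarrow> nat \<Rightarrow> complex" where
  "I3 a b = (if a = b then 1 else 0)"

text \<open>Kronecker product M_1 \<otimes> ... \<otimes> M_d (factor i is M (i-1)) under the identification
  y \<mapsto> e_{y_1} \<otimes> ... \<otimes> e_{y_d}: its (y,z)-entry is \<Prod>_i M_i(y_i,z_i).\<close>
definition tensor :: "nat \<Rightarrow> (nat \<Rightarrow> nat \<Rightarrow> nat \<Rightarrow> complex) \<Rightarrow> xmat" where
  "tensor d M = (\<lambda>y z. if y \<in> vertices d \<and> z \<in> vertices d
                        then (\<Prod>i<d. M i (y ! i) (z ! i)) else 0)"

definition Lmap :: "nat \<Rightarrow> (nat \<Rightarrow> nat \<Rightarrow> complex) \<Rightarrow> xmat" where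
  "Lmap d M = (\<lambda>y z. \<Sum>i<d. tensor d (\<lambda>j. if j = i then M else I3) y z)"

end

theory Submission
  imports Defs
begin

text \<open>The map \<open>L\<close> is linear in \<open>M\<close>, so it suffices to treat the matrix units \<open>E_ab\<close>.
  \<open>L(E_aa)\<close> is diagonal with \<open>(y,y)\<close>-entry the number of \<open>a\<close>'s in \<open>y\<close>, which is a function of the
  type \<open>(s,t)\<close> of \<open>y\<close>; hence it is a combination of the \<open>E*_[s,t]\<close>. For \<open>b = a + 1\<close>,
  \<open>L(E_ab)\<close> consists of the arcs of \<open>A\<close> that turn an \<open>a\<close> into \<open>a + 1\<close>, and the changed digit can be
  read off from how the type changes along the arc. So \<open>L(E_ab)\<close> arises from \<open>A\<close> by rescaling each
  block \<open>E*_p A E*_q\<close>, and \<open>L(E_ba)\<close>, its transpose, arises from \<open>A\<^sup>T\<close> in the same way.\<close>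

lemma terwilliger_lincomb:
  assumes "finite K" and "\<And>k. k \<in> K \<Longrightarrow> P k \<in> terwilliger d"
  shows "(\<lambda>y z. \<Sum>k\<in>K. c k * P k y z) \<in> terwilliger d"
  using assms
proof (induction K rule: finite_induct)
  case empty
  show ?case using terwilliger.smult[OF terwilliger.genA, of 0] by simp
next
  case (insert k K)
  then show ?case
    using terwilliger.add[OF terwilliger.smult[of "P k" d "c k"] insert.IH] by simp
qed

lemma finite_vertices: "finite (vertices d)"
proof -
  have "vertices d = {xs. set xs \<subseteq> {..<3} \<and> length xs = d}"
    unfolding vertices_def by auto
  then show ?thesis using finite_lists_length_eq[of "{..<3::nat}" d] by simp
qed

definition vtype :: "nat list \<Rightarrow> nat \<times> nat" where
  "vtype y = (count_list y 1, count_list y 2)"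

abbreviation Etype :: "nat \<Rightarrow> nat \<times> nat \<Rightarrow> xmat" where
  "Etype d p \<equiv> Estar d (int (fst p)) (int (snd p))"

lemma vtype_bounded: "y \<in> vertices d \<Longrightarrow> vtype y \<in> {..d} \<times> {..d}"
  unfolding vtype_def vertices_def using count_le_length by auto

lemma Etype_apply:
  "Etype d p y z = (if y \<in> vertices d \<and> z = y \<and> vtype y = p then 1 else 0)"
  unfolding Estar_def vtype_def by (cases p) auto

lemma xmult_Etype_left:
  "xmult d (Etype d p) P y z = (if y \<in> vertices d \<and> vtype y = p then P y z else 0)"
proof -
  have "xmult d (Etype d p) P y z =
        (\<Sum>w\<in>vertices d. if w = y then (if y \<in> vertices d \<and> vtype y = p then P y z else 0) else 0)"
    unfolding xmult_def Etype_apply by (intro sum.cong) auto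
  then show ?thesis using finite_vertices by simp
qed

lemma xmult_Etype_right:
  "xmult d P (Etype d p) y z = (if z \<in> vertices d \<and> vtype z = p then P y z else 0)"
proof -
  have "xmult d P (Etype d p) y z =
        (\<Sum>w\<in>vertices d. if w = z then (if z \<in> vertices d \<and> vtype z = p then P y z else 0) else 0)"
    unfolding xmult_def Etype_apply by (intro sum.cong) auto
  then show ?thesis using finite_vertices by simp
qed

lemma terwilliger_diagonal:
  "(\<lambda>y z. if y \<in> vertices d \<and> z = y then g (vtype y) else 0) \<in> terwilliger d"
proof -
  have "(\<lambda>y z. if y \<in> vertices d \<and> z = y then g (vtype y) else 0) =
        (\<lambda>y z. \<Sum>p\<in>{..d} \<times> {..d}. g p * Etype d p y z)"
    by (intro ext) (auto simp: Etype_apply if_distrib[of "\<lambda>x. _ * x"] vtype_bounded cong: if_cong)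
  then show ?thesis by (auto intro: terwilliger_lincomb terwilliger.genE)
qed

lemma terwilliger_reweight:
  assumes "P \<in> terwilliger d" and "\<And>y z. P y z \<noteq> 0 \<Longrightarrow> y \<in> vertices d \<and> z \<in> vertices d"
  shows "(\<lambda>y z. g (vtype y) (vtype z) * P y z) \<in> terwilliger d"
proof -
  \<comment> \<open>\<open>P\<close> is the sum of its blocks \<open>E*_p P E*_q\<close>, each of which lies in the algebra\<close>
  let ?S = "({..d} \<times> {..d}) \<times> ({..d} \<times> {..d})"
  let ?block = "\<lambda>pq. xmult d (xmult d (Etype d (fst pq)) P) (Etype d (snd pq))"
  have block: "?block pq y z = (if y \<in> vertices d \<and> z \<in> vertices d \<and> (vtype y, vtype z) = pq
                                then P y z else 0)" for pq y z
    by (auto simp: xmult_Etype_left xmult_Etype_right prod_eq_iff)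
  have "(\<lambda>y z. g (vtype y) (vtype z) * P y z) = (\<lambda>y z. \<Sum>pq\<in>?S. g (fst pq) (snd pq) * ?block pq y z)"
  proof (intro ext)
    fix y z
    show "g (vtype y) (vtype z) * P y z = (\<Sum>pq\<in>?S. g (fst pq) (snd pq) * ?block pq y z)"
      using assms(2)[of y z] vtype_bounded[of y d] vtype_bounded[of z d]
      by (cases "P y z = 0") (auto simp: block if_distrib[of "\<lambda>x. _ * x"] cong: if_cong)
  qed
  then show ?thesis
    by (auto intro!: terwilliger_lincomb terwilliger.mult terwilliger.genE assms(1))
qed

lemma tensor_single_factor:
  assumes "y \<in> vertices d" "z \<in> vertices d" "i < d"
  shows "tensor d (\<lambda>j. if j = i then M else I3) y z =
         (if \<forall>j<d. j \<noteq> i \<longrightarrow> y ! j = z ! j then M (y ! i) (z ! i) else 0)"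
proof -
  have "tensor d (\<lambda>j. if j = i then M else I3) y z =
        M (y ! i) (z ! i) * (\<Prod>j\<in>{..<d} - {i}. I3 (y ! j) (z ! j))"
    using assms unfolding tensor_def by (subst prod.remove[of _ i]) (auto intro!: prod.cong)
  moreover have "(\<Prod>j\<in>{..<d} - {i}. I3 (y ! j) (z ! j)) =
                 (if \<forall>j<d. j \<noteq> i \<longrightarrow> y ! j = z ! j then 1 else 0)"
    by (auto simp: I3_def prod_zero_iff)
  ultimately show ?thesis by auto
qed

lemma Lmap_outside: "y \<notin> vertices d \<or> z \<notin> vertices d \<Longrightarrow> Lmap d M y z = 0"
  unfolding Lmap_def tensor_def by auto

lemma Lmap_apply:
  assumes "y \<in> vertices d" "z \<in> vertices d"
  shows "Lmap d M y z =
         (\<Sum>i<d. if \<forall>j<d. j \<noteq> i \<longrightarrow> y ! j = z ! j then M (y ! i) (z ! i) else 0)"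
  unfolding Lmap_def using assms by (simp add: tensor_single_factor)

lemma Lmap_lincomb:
  "Lmap d (\<lambda>u v. \<Sum>k\<in>K. c k * N k u v) y z = (\<Sum>k\<in>K. c k * Lmap d (N k) y z)"
proof (cases "y \<in> vertices d \<and> z \<in> vertices d")
  case True
  define C where "C i \<longleftrightarrow> (\<forall>j<d. j \<noteq> i \<longrightarrow> y ! j = z ! j)" for i
  have "Lmap d (\<lambda>u v. \<Sum>k\<in>K. c k * N k u v) y z =
        (\<Sum>i<d. \<Sum>k\<in>K. c k * (if C i then N k (y ! i) (z ! i) else 0))"
    using True unfolding Lmap_apply[OF True[THEN conjunct1] True[THEN conjunct2]] C_def[symmetric]
    by (intro sum.cong refl) (simp add: sum_distrib_left)
  also have "\<dots> = (\<Sum>k\<in>K. c k * Lmap d (N k) y z)"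
    using True by (simp add: Lmap_apply C_def sum_distrib_left sum.swap[of _ "{..<d}"])
  finally show ?thesis .
qed (auto simp: Lmap_outside)

lemma Lmap_cong:
  assumes "\<And>u v. u < 3 \<Longrightarrow> v < 3 \<Longrightarrow> M u v = N u v"
  shows "Lmap d M = Lmap d N"
proof (intro ext)
  fix y z
  show "Lmap d M y z = Lmap d N y z"
  proof (cases "y \<in> vertices d \<and> z \<in> vertices d")
    case True
    then have "\<And>i. i < d \<Longrightarrow> y ! i < 3 \<and> z ! i < 3"
      unfolding vertices_def by auto
    with True show ?thesis by (auto simp: Lmap_apply assms intro!: sum.cong)
  qed (auto simp: Lmap_outside)
qed

lemma Lmap_transpose: "Lmap d (\<lambda>u v. M v u) y z = Lmap d M z y"
proof (cases "y \<in> vertices d \<and> z \<in> vertices d")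
  case True
  then show ?thesis by (simp add: Lmap_apply eq_commute)
qed (auto simp: Lmap_outside)

lemma count_list_list_update:
  "i < length xs \<Longrightarrow>
   int (count_list (xs[i := v]) x) =
   int (count_list xs x) - (if xs ! i = x then 1 else 0) + (if v = x then 1 else 0)"
proof (induction xs arbitrary: i)
  case (Cons a xs)
  show ?case
  proof (cases i)
    case (Suc j)
    with Cons.prems Cons.IH[of j] show ?thesis by auto
  qed auto
qed simp

lemma of_nat_count_list:
  "of_nat (count_list y a) = (\<Sum>i<length y. if y ! i = a then 1 else (0::complex))"
proof -
  have "count_list y a = card {i. i < length y \<and> y ! i = a}"
    by (simp add: count_list_eq_length_filter length_filter_conv_card eq_commute)
  then show ?thesis
    by (simp add: sum.If_cases lessThan_def Collect_conj_eq Int_commute)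
qed

definition type_diff :: "nat \<times> nat \<Rightarrow> nat \<times> nat \<Rightarrow> int \<times> int" where
  "type_diff p q = (int (fst q) - int (fst p), int (snd q) - int (snd p))"

definition type_shift :: "nat \<Rightarrow> int \<times> int" where
  "type_shift a = (if a = 0 then (1, 0) else if a = 1 then (-1, 1) else (0, -1))"

lemma type_shift_inj: "a < 3 \<Longrightarrow> b < 3 \<Longrightarrow> type_shift a = type_shift b \<Longrightarrow> a = b"
  unfolding type_shift_def by (auto split: if_splits)

lemma type_diff_increment:
  assumes "y \<in> vertices d" "i < d"
  shows "type_diff (vtype y) (vtype (y[i := (y ! i + 1) mod 3])) = type_shift (y ! i)"
proof -
  have i: "i < length y" and "y ! i < 3" using assms unfolding vertices_def by auto
  then consider "y ! i = 0" | "y ! i = 1" | "y ! i = 2" by linarith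
  then show ?thesis
    unfolding type_diff_def type_shift_def vtype_def by cases (simp_all add: count_list_list_update[OF i])
qed

lemma list_update_eq_iff:
  "length y = d \<Longrightarrow> length z = d \<Longrightarrow> i < d \<Longrightarrow>
   z = y[i := b] \<longleftrightarrow> z ! i = b \<and> (\<forall>j<d. j \<noteq> i \<longrightarrow> y ! j = z ! j)"
  by (auto intro!: nth_equalityI simp: nth_list_update)

lemma arc_iff_increment:
  assumes "y \<in> vertices d" "z \<in> vertices d"
  shows "arc d y z \<longleftrightarrow> (\<exists>i<d. z = y[i := (y ! i + 1) mod 3])"
proof -
  have len: "length y = d" "length z = d" using assms by (auto simp: vertices_def)
  show ?thesis unfolding arc_def using list_update_eq_iff[OF len] by metis
qed

definition matrix_unit :: "nat \<Rightarrow> nat \<Rightarrow> nat \<Rightarrow> nat \<Rightarrow> complex" where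
  "matrix_unit a b u v = (if u = a \<and> v = b then 1 else 0)"

lemma Lmap_matrix_unit_apply:
  assumes "y \<in> vertices d" "z \<in> vertices d"
  shows "Lmap d (matrix_unit a b) y z = (\<Sum>i<d. if y ! i = a \<and> z = y[i := b] then 1 else 0)"
  using assms unfolding Lmap_apply[OF assms] vertices_def
  by (auto simp: matrix_unit_def list_update_eq_iff intro!: sum.cong)

lemma Lmap_matrix_unit_diagonal:
  "Lmap d (matrix_unit a a) = (\<lambda>y z. if y \<in> vertices d \<and> z = y then of_nat (count_list y a) else 0)"
proof (intro ext)
  fix y z
  show "Lmap d (matrix_unit a a) y z = (if y \<in> vertices d \<and> z = y then of_nat (count_list y a) else 0)"
  proof (cases "y \<in> vertices d \<and> z \<in> vertices d")
    case True
    then have "length y = d" by (simp add: vertices_def)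
    moreover have "(y ! i = a \<and> z = y[i := a]) \<longleftrightarrow> (y ! i = a \<and> z = y)" for i
      by auto
    ultimately show ?thesis
      using True by (auto simp: Lmap_matrix_unit_apply of_nat_count_list)
  qed (auto simp: Lmap_outside)
qed

lemma Lmap_matrix_unit_off_diagonal:
  assumes "a \<noteq> b"
  shows "Lmap d (matrix_unit a b) y z =
         (if y \<in> vertices d \<and> z \<in> vertices d \<and> (\<exists>i<d. y ! i = a \<and> z = y[i := b]) then 1 else 0)"
proof (cases "y \<in> vertices d \<and> z \<in> vertices d")
  case True
  then have len: "length y = d" by (simp add: vertices_def)
  show ?thesis
  proof (cases "\<exists>i<d. y ! i = a \<and> z = y[i := b]")
    case True
    then obtain i where i: "i < d" "y ! i = a" "z = y[i := b]" by blast
    \<comment> \<open>the changed coordinate is unique, since it holds \<open>a\<close> in \<open>y\<close> but \<open>b \<noteq> a\<close> in \<open>z\<close>\<close>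
    have unique: "y ! j = a \<and> z = y[j := b] \<longleftrightarrow> j = i" if "j < d" for j
    proof
      assume j: "y ! j = a \<and> z = y[j := b]"
      show "j = i"
      proof (rule ccontr)
        assume "j \<noteq> i"
        then have "z ! i = a" using i(2) j by simp
        moreover have "z ! i = b" using i len by simp
        ultimately show False using assms by simp
      qed
    qed (use i in simp)
    have "(\<Sum>j<d. if y ! j = a \<and> z = y[j := b] then 1 else 0) = (\<Sum>j<d. if j = i then 1 else (0::complex))"
      by (intro sum.cong) (simp_all add: unique)
    with True \<open>y \<in> vertices d \<and> z \<in> vertices d\<close> i(1) show ?thesis
      by (simp add: Lmap_matrix_unit_apply)
  qed (use True in \<open>auto simp: Lmap_matrix_unit_apply intro!: sum.neutral\<close>)
qed (auto simp: Lmap_outside)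

lemma count_list_by_vtype:
  assumes "y \<in> vertices d" "a < 3"
  shows "count_list y a =
         (if a = 1 then fst (vtype y) else if a = 2 then snd (vtype y) else d - fst (vtype y) - snd (vtype y))"
proof -
  have "set y \<subseteq> {0, 1, 2}" and "length y = d" using assms(1) by (auto simp: vertices_def)
  then have "count_list y 0 + count_list y 1 + count_list y 2 = d"
    using sum_count_set[of y "{0, 1, 2}"] by simp
  moreover have "a = 0 \<or> a = 1 \<or> a = 2" using assms(2) by auto
  ultimately show ?thesis unfolding vtype_def by auto
qed

lemma Lmap_matrix_unit_diagonal_in_terwilliger:
  assumes "a < 3"
  shows "Lmap d (matrix_unit a a) \<in> terwilliger d"
proof -
  let ?g = "\<lambda>p. of_nat (if a = 1 then fst p else if a = 2 then snd p else d - fst p - snd p) :: complex"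
  have "Lmap d (matrix_unit a a) = (\<lambda>y z. if y \<in> vertices d \<and> z = y then ?g (vtype y) else 0)"
    unfolding Lmap_matrix_unit_diagonal using count_list_by_vtype[OF _ assms] by (intro ext) auto
  then show ?thesis using terwilliger_diagonal[of d ?g] by simp
qed

definition shift_weight :: "nat \<Rightarrow> nat \<times> nat \<Rightarrow> nat \<times> nat \<Rightarrow> complex" where
  "shift_weight a p q = (if type_diff p q = type_shift a then 1 else 0)"

lemma Lmap_matrix_unit_increment:
  assumes "a < 3"
  shows "Lmap d (matrix_unit a ((a + 1) mod 3)) y z = shift_weight a (vtype y) (vtype z) * adjA d y z"
proof (cases "y \<in> vertices d \<and> z \<in> vertices d")
  case True
  then have y: "y \<in> vertices d" and z: "z \<in> vertices d" by auto
  have "(\<exists>i<d. y ! i = a \<and> z = y[i := (a + 1) mod 3]) \<longleftrightarrow>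
        arc d y z \<and> type_diff (vtype y) (vtype z) = type_shift a"
  proof
    assume "\<exists>i<d. y ! i = a \<and> z = y[i := (a + 1) mod 3]"
    then show "arc d y z \<and> type_diff (vtype y) (vtype z) = type_shift a"
      using arc_iff_increment[OF y z] type_diff_increment[OF y] by auto
  next
    assume "arc d y z \<and> type_diff (vtype y) (vtype z) = type_shift a"
    moreover obtain i where i: "i < d" "z = y[i := (y ! i + 1) mod 3]"
      using calculation arc_iff_increment[OF y z] by blast
    moreover have "y ! i < 3" using y i(1) by (auto simp: vertices_def)
    ultimately have "y ! i = a"
      using type_diff_increment[OF y i(1)] type_shift_inj assms by metis
    with i show "\<exists>i<d. y ! i = a \<and> z = y[i := (a + 1) mod 3]" by auto
  qed
  moreover have "a \<in> {0, 1, 2}" using assms by auto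
  then have "a \<noteq> (a + 1) mod 3" by auto
  ultimately show ?thesis
    using True by (simp add: Lmap_matrix_unit_off_diagonal shift_weight_def adjA_def)
qed (auto simp: Lmap_outside adjA_def)

lemma Lmap_matrix_unit_decrement:
  assumes "a < 3"
  shows "Lmap d (matrix_unit ((a + 1) mod 3) a) y z = shift_weight a (vtype z) (vtype y) * adjAT d y z"
proof -
  have "matrix_unit ((a + 1) mod 3) a = (\<lambda>u v. matrix_unit a ((a + 1) mod 3) v u)"
    by (intro ext) (simp add: matrix_unit_def conj_commute)
  then have "Lmap d (matrix_unit ((a + 1) mod 3) a) y z = Lmap d (matrix_unit a ((a + 1) mod 3)) z y"
    by (simp only: Lmap_transpose[of d "matrix_unit a ((a + 1) mod 3)" y z])
  then show ?thesis
    by (simp only: Lmap_matrix_unit_increment[OF assms] adjAT_def)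
qed

lemma adjA_support: "adjA d y z \<noteq> 0 \<Longrightarrow> y \<in> vertices d \<and> z \<in> vertices d"
  unfolding adjA_def by (auto split: if_splits)

lemma Lmap_matrix_unit_in_terwilliger:
  assumes "a < 3" "b < 3"
  shows "Lmap d (matrix_unit a b) \<in> terwilliger d"
proof -
  have "a \<in> {0, 1, 2}" "b \<in> {0, 1, 2}" using assms by auto
  then have "b = a \<or> b = (a + 1) mod 3 \<or> a = (b + 1) mod 3" by auto
  moreover have "Lmap d (matrix_unit a ((a + 1) mod 3)) \<in> terwilliger d"
    unfolding Lmap_matrix_unit_increment[OF assms(1), abs_def]
    by (rule terwilliger_reweight[OF terwilliger.genA]) (auto dest: adjA_support)
  moreover have "Lmap d (matrix_unit ((b + 1) mod 3) b) \<in> terwilliger d"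
    unfolding Lmap_matrix_unit_decrement[OF assms(2), abs_def]
    by (rule terwilliger_reweight[OF terwilliger.genAT]) (auto simp: adjAT_def dest: adjA_support)
  ultimately show ?thesis using Lmap_matrix_unit_diagonal_in_terwilliger assms by auto
qed

lemma Lmap_matrix_unit_expansion:
  "Lmap d M = (\<lambda>y z. \<Sum>p\<in>{..<3} \<times> {..<3}. case_prod M p * Lmap d (case_prod matrix_unit p) y z)"
proof -
  have "case_prod M p * case_prod matrix_unit p u v = (if p = (u, v) then M u v else 0)" for p u v
    by (cases p) (auto simp: matrix_unit_def)
  then have "Lmap d M = Lmap d (\<lambda>u v. \<Sum>p\<in>{..<3} \<times> {..<3}. case_prod M p * case_prod matrix_unit p u v)"
    by (intro Lmap_cong) simp
  then show ?thesis by (simp add: fun_eq_iff Lmap_lincomb)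
qed

theorem lemma5p4:
  fixes d :: nat and M :: "nat \<Rightarrow> nat \<Rightarrow> complex"
  assumes "d \<ge> 1"
  shows "Lmap d M \<in> terwilliger d"
  by (subst Lmap_matrix_unit_expansion)
     (rule terwilliger_lincomb; auto intro: Lmap_matrix_unit_in_terwilliger)

end
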